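(* For every $r\ge 1$ and $k\ge 1$ there exists $n_0=n_0(r,k)$ such that for every $n>n_0$ the following holds. Let $[n]^r$ denote the complete $r$-partite $r$-uniform hypergraph with $r$ disjoint sides $V_1,\ldots,V_r$, each of size $n$, whose edges are all $r$-sets meeting each $V_j$ in exactly one vertex. If $F_1,\ldots,F_k\subseteq [n]^r$ satisfy $|F_i|>(k-1)n^{r-1}$ for all $i\le k$, then there exist pairwise disjoint edges $e_1,\ldots,e_k$ with $e_i\in F_i$ for every $i$ (a rainbow matching).
   Context: A rainbow matching for a collection $(F_1,\ldots,F_k)$ of hypergraphs is a choice of pairwise disjoint edges $e_i\in F_i$, one from each $F_i$. *)

theory Defs
  imports Main
begin

text \<open>Vertices of the complete r-partite r-uniform hypergraph with sides of size n:
  pairs (j, v) with j < r (side index) and v < n (vertex within side V_j).\<close>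

definition complete_rpartite :: "nat \<Rightarrow> nat \<Rightarrow> (nat \<times> nat) set set" where
  "complete_rpartite r n =
     {e. e \<subseteq> {0..<r} \<times> {0..<n} \<and> (\<forall>j<r. card {v. (j, v) \<in> e} = 1)}"

definition rainbow_matching ::
  "nat \<Rightarrow> (nat \<Rightarrow> 'a set set) \<Rightarrow> (nat \<Rightarrow> 'a set) \<Rightarrow> bool" where
  "rainbow_matching k F e \<longleftrightarrow>
     (\<forall>i<k. e i \<in> F i) \<and> (\<forall>i<k. \<forall>j<k. i \<noteq> j \<longrightarrow> e i \<inter> e j = {})"

end

theory Submission
  imports Defs "HOL-Library.Disjoint_Sets"
begin

text \<open>Let t = (r + 1) k and call F extendable from a vertex set P if every set of at most t
  vertices disjoint from P is missed by some edge of F containing P. Every vertex has degree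
  at most n^(r-1), so a family with more than (k - 1) n^(r-1) edges that is not extendable
  from the empty set has a cover of at most t vertices, at least k - 1 of them heavy, i.e. of
  degree at least n^(r-1)/t. Two vertices share at most n^(r-2) edges, so for n > t^2 the
  family is extendable from each of its heavy vertices. Reserve a distinct heavy vertex for
  every such family; by a Hall-type argument this fails only if all k families have the same
  k - 1 heavy vertices, and then the first family has an edge missing them, which is
  reserved for it instead. Now the families choose their edges one after another, each
  containing its reservation and avoiding the earlier edges and the other reservations,
  at most t vertices in all.\<close>

section \<open>Edges of the complete r-partite hypergraph\<close>

lemma complete_rpartite_memD:
  assumes "e \<in> complete_rpartite r n" "(j, v) \<in> e"
  shows "j < r" "v < n"
  using assms by (auto simp: complete_rpartite_def)

lemma complete_rpartite_ex1:
  assumes "e \<in> complete_rpartite r n" "j < r"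
  shows "\<exists>!v. (j, v) \<in> e"
proof -
  have "card {v. (j, v) \<in> e} = 1" using assms by (simp add: complete_rpartite_def)
  then obtain v where "{v. (j, v) \<in> e} = {v}" by (auto simp: card_1_singleton_iff)
  then show ?thesis by (metis (mono_tags) mem_Collect_eq singletonD singletonI)
qed

definition vertex_at :: "(nat \<times> nat) set \<Rightarrow> nat \<Rightarrow> nat" where
  "vertex_at e j = (THE v. (j, v) \<in> e)"

lemma vertex_at_eq:
  assumes "e \<in> complete_rpartite r n" "(j, v) \<in> e"
  shows "vertex_at e j = v"
  unfolding vertex_at_def
  by (rule the1_equality[OF complete_rpartite_ex1[OF assms(1) complete_rpartite_memD(1)[OF assms]] assms(2)])

lemma vertex_at_mem:
  assumes "e \<in> complete_rpartite r n" "j < r"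
  shows "(j, vertex_at e j) \<in> e"
  using complete_rpartite_ex1[OF assms] vertex_at_eq[OF assms(1)] by blast

lemma vertex_at_less:
  assumes "e \<in> complete_rpartite r n" "j < r"
  shows "vertex_at e j < n"
  using complete_rpartite_memD(2)[OF assms(1) vertex_at_mem[OF assms]] .

lemma complete_rpartite_edge_eq:
  assumes "e \<in> complete_rpartite r n"
  shows "e = (\<lambda>j. (j, vertex_at e j)) ` {..<r}"
proof
  show "e \<subseteq> (\<lambda>j. (j, vertex_at e j)) ` {..<r}"
  proof
    fix x assume "x \<in> e"
    moreover obtain j v where x: "x = (j, v)" by fastforce
    ultimately have "j < r" "vertex_at e j = v"
      using complete_rpartite_memD(1)[OF assms] vertex_at_eq[OF assms] by blast+
    then show "x \<in> (\<lambda>j. (j, vertex_at e j)) ` {..<r}" using x by blast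
  qed
  show "(\<lambda>j. (j, vertex_at e j)) ` {..<r} \<subseteq> e"
    using vertex_at_mem[OF assms] by blast
qed

lemma complete_rpartite_edge_eqI:
  assumes "e \<in> complete_rpartite r n" "e' \<in> complete_rpartite r n"
    and agree: "\<And>j. j < r \<Longrightarrow> vertex_at e j = vertex_at e' j"
  shows "e = e'"
proof -
  have "e = (\<lambda>j. (j, vertex_at e j)) ` {..<r}"
    by (rule complete_rpartite_edge_eq[OF assms(1)])
  also have "\<dots> = (\<lambda>j. (j, vertex_at e' j)) ` {..<r}"
    using agree by (intro image_cong) simp_all
  also have "\<dots> = e'"
    by (rule complete_rpartite_edge_eq[OF assms(2), symmetric])
  finally show ?thesis .
qed

lemma inj_on_fst_complete_rpartite_edge:
  assumes "e \<in> complete_rpartite r n"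
  shows "inj_on fst e"
  by (intro inj_onI) (metis prod.collapse vertex_at_eq[OF assms])

lemma finite_complete_rpartite_edge:
  assumes "e \<in> complete_rpartite r n"
  shows "finite e"
proof -
  have "finite ((\<lambda>j. (j, vertex_at e j)) ` {..<r})" by simp
  with complete_rpartite_edge_eq[OF assms] show ?thesis by (rule ssubst)
qed

lemma card_complete_rpartite_edge:
  assumes "e \<in> complete_rpartite r n"
  shows "card e = r"
proof -
  have "card ((\<lambda>j. (j, vertex_at e j)) ` {..<r}) = r"
    by (simp add: card_image inj_on_def)
  with complete_rpartite_edge_eq[OF assms] show ?thesis by (rule ssubst)
qed

lemma finite_complete_rpartite: "finite (complete_rpartite r n)"
proof (rule finite_subset)
  show "complete_rpartite r n \<subseteq> Pow ({0..<r} \<times> {0..<n})"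
    by (auto simp: complete_rpartite_def)
qed simp

lemma inj_on_restrict_vertex_at:
  "inj_on (\<lambda>e. restrict (vertex_at e) ({..<r} - fst ` S)) {e \<in> complete_rpartite r n. S \<subseteq> e}"
proof (rule inj_onI)
  fix e e' assume "e \<in> {e \<in> complete_rpartite r n. S \<subseteq> e}"
    and "e' \<in> {e \<in> complete_rpartite r n. S \<subseteq> e}"
    and eq: "restrict (vertex_at e) ({..<r} - fst ` S) = restrict (vertex_at e') ({..<r} - fst ` S)"
  then have e: "e \<in> complete_rpartite r n" "S \<subseteq> e"
    and e': "e' \<in> complete_rpartite r n" "S \<subseteq> e'" by auto
  have "vertex_at e j = vertex_at e' j" if "j < r" for j
  proof (cases "j \<in> fst ` S")
    case True
    then obtain v where "(j, v) \<in> S" by force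
    then show ?thesis using vertex_at_eq[OF e(1)] vertex_at_eq[OF e'(1)] e(2) e'(2) by blast
  next
    case False
    then show ?thesis using fun_cong[OF eq, of j] that by simp
  qed
  then show "e = e'" by (rule complete_rpartite_edge_eqI[OF e(1) e'(1)])
qed

lemma card_complete_rpartite_supsets:
  "card {e \<in> complete_rpartite r n. S \<subseteq> e} \<le> n ^ (r - card S)"
proof (cases "{e \<in> complete_rpartite r n. S \<subseteq> e} = {}")
  case True
  then show ?thesis by (simp only: card.empty zero_le)
next
  case False
  then obtain e0 where e0: "e0 \<in> complete_rpartite r n" "S \<subseteq> e0" by blast
  define D where "D = fst ` S"
  have card_D: "card D = card S"
    unfolding D_def using inj_on_fst_complete_rpartite_edge[OF e0(1)] e0(2)
    by (simp add: card_image inj_on_subset)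
  have D_sub: "D \<subseteq> {..<r}"
    unfolding D_def using e0 complete_rpartite_memD(1) by fastforce
  have "card {e \<in> complete_rpartite r n. S \<subseteq> e} \<le> card (\<Pi>\<^sub>E j\<in>{..<r} - D. {..<n})"
  proof (rule card_inj_on_le)
    show "inj_on (\<lambda>e. restrict (vertex_at e) ({..<r} - D)) {e \<in> complete_rpartite r n. S \<subseteq> e}"
      unfolding D_def by (rule inj_on_restrict_vertex_at)
    show "(\<lambda>e. restrict (vertex_at e) ({..<r} - D)) ` {e \<in> complete_rpartite r n. S \<subseteq> e}
        \<subseteq> (\<Pi>\<^sub>E j\<in>{..<r} - D. {..<n})"
      by (rule image_subsetI) (auto simp: vertex_at_less)
  qed (rule finite_PiE; simp)
  also have "\<dots> = n ^ card ({..<r} - D)"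
    by (simp add: card_PiE)
  also have "\<dots> = n ^ (r - card S)"
    using D_sub card_D finite_subset[OF D_sub] by (simp add: card_Diff_subset)
  finally show ?thesis .
qed

section \<open>Degrees and heavy vertices\<close>

definition deg :: "'a set set \<Rightarrow> 'a \<Rightarrow> nat" where
  "deg F v = card {e \<in> F. v \<in> e}"

lemma card_le_sum_deg_of_cover:
  assumes "finite Z" and cover: "\<And>e. e \<in> F \<Longrightarrow> e \<inter> Z \<noteq> {}"
  shows "card F \<le> (\<Sum>z\<in>Z. deg F z)"
proof -
  have "F = (\<Union>z\<in>Z. {e \<in> F. z \<in> e})" using cover by blast
  then have "card F = card (\<Union>z\<in>Z. {e \<in> F. z \<in> e})" by simp
  also have "\<dots> \<le> (\<Sum>z\<in>Z. deg F z)"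
    unfolding deg_def using assms(1) by (rule card_UN_le)
  finally show ?thesis .
qed

lemma deg_complete_rpartite_le:
  assumes "F \<subseteq> complete_rpartite r n"
  shows "deg F v \<le> n ^ (r - 1)"
proof -
  have "deg F v \<le> card {e \<in> complete_rpartite r n. {v} \<subseteq> e}"
    unfolding deg_def using assms by (intro card_mono) (auto simp: finite_complete_rpartite)
  also have "\<dots> \<le> n ^ (r - 1)"
    using card_complete_rpartite_supsets[of r n "{v}"] by simp
  finally show ?thesis .
qed

lemma codeg_complete_rpartite_le:
  assumes "u \<noteq> w"
  shows "n * card {e \<in> complete_rpartite r n. u \<in> e \<and> w \<in> e} \<le> n ^ (r - 1)"
proof (cases "r \<ge> 2")
  case True
  have "card {e \<in> complete_rpartite r n. u \<in> e \<and> w \<in> e} \<le> n ^ (r - 2)"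
    using card_complete_rpartite_supsets[of r n "{u, w}"] assms by (simp add: numeral_2_eq_2)
  then have "n * card {e \<in> complete_rpartite r n. u \<in> e \<and> w \<in> e} \<le> n * n ^ (r - 2)"
    by simp
  also have "n * n ^ (r - 2) = n ^ Suc (r - 2)"
    by simp
  also have "Suc (r - 2) = r - 1"
    using True by simp
  finally show ?thesis .
next
  case False
  have "{e \<in> complete_rpartite r n. u \<in> e \<and> w \<in> e} = {}"
  proof (intro equals0I)
    fix e assume e: "e \<in> {e \<in> complete_rpartite r n. u \<in> e \<and> w \<in> e}"
    then have "card {u, w} \<le> card e"
      by (intro card_mono) (auto intro: finite_complete_rpartite_edge)
    moreover have "card e = r"
      using e card_complete_rpartite_edge by blast
    ultimately show False
      using assms False by simp
  qed
  then show ?thesis by (simp only: card.empty mult_0_right zero_le)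
qed

definition extendable :: "nat \<Rightarrow> 'a set set \<Rightarrow> 'a set \<Rightarrow> bool" where
  "extendable t F P \<longleftrightarrow>
     (\<forall>Z. finite Z \<longrightarrow> card Z \<le> t \<longrightarrow> Z \<inter> P = {} \<longrightarrow> (\<exists>e\<in>F. P \<subseteq> e \<and> e \<inter> Z = {}))"

lemma extendable_edge: "g \<in> F \<Longrightarrow> extendable t F g"
  by (auto simp: extendable_def)

definition heavy :: "nat \<Rightarrow> nat \<Rightarrow> nat \<Rightarrow> (nat \<times> nat) set set \<Rightarrow> (nat \<times> nat) set" where
  "heavy r n t F = {v. n ^ (r - 1) \<le> t * deg F v}"

lemma finite_heavy:
  assumes F: "F \<subseteq> complete_rpartite r n" and "0 < n"
  shows "finite (heavy r n t F)"
proof (rule finite_subset)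
  show "heavy r n t F \<subseteq> \<Union>F"
  proof
    fix v assume "v \<in> heavy r n t F"
    then have "0 < deg F v"
      using \<open>0 < n\<close> by (auto simp: heavy_def intro: Nat.gr0I)
    then obtain e where "e \<in> F" "v \<in> e"
      unfolding deg_def by (metis (no_types, lifting) card_gt_0_iff empty_Collect_eq)
    then show "v \<in> \<Union>F" by blast
  qed
  show "finite (\<Union>F)"
    using F finite_complete_rpartite finite_complete_rpartite_edge by (meson finite_Union finite_subset subsetD)
qed

text \<open>Each z \<in> Z lies on at most n^(r-2) edges through a, so if Z met all of them we would
  get n \<le> t^2.\<close>

lemma extendable_heavy:
  assumes F: "F \<subseteq> complete_rpartite r n" and n: "t * t < n" and a: "a \<in> heavy r n t F"
  shows "extendable t F {a}"
  unfolding extendable_def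
proof (intro allI impI)
  fix Z assume Z: "finite Z" "card Z \<le> t" "Z \<inter> {a} = {}"
  show "\<exists>e\<in>F. {a} \<subseteq> e \<and> e \<inter> Z = {}"
  proof (rule ccontr)
    assume "\<not> ?thesis"
    then have cover: "\<And>e. e \<in> {e \<in> F. a \<in> e} \<Longrightarrow> e \<inter> Z \<noteq> {}" by auto
    let ?D = "n ^ (r - 1)"
    have "deg F a \<le> (\<Sum>z\<in>Z. deg {e \<in> F. a \<in> e} z)"
      using card_le_sum_deg_of_cover[of Z "{e \<in> F. a \<in> e}"] Z(1) cover by (simp add: deg_def)
    also have "\<dots> \<le> (\<Sum>z\<in>Z. card {e \<in> complete_rpartite r n. a \<in> e \<and> z \<in> e})"
      unfolding deg_def using F by (intro sum_mono card_mono) (auto simp: finite_complete_rpartite)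
    finally have "n * deg F a \<le> (\<Sum>z\<in>Z. n * card {e \<in> complete_rpartite r n. a \<in> e \<and> z \<in> e})"
      by (simp add: sum_distrib_left[symmetric])
    also have "\<dots> \<le> (\<Sum>z\<in>Z. ?D)"
      using Z(3) by (intro sum_mono codeg_complete_rpartite_le) auto
    also have "\<dots> \<le> t * ?D"
      using Z(2) by simp
    finally have through_a: "n * deg F a \<le> t * ?D" .
    have "n * ?D \<le> n * (t * deg F a)"
      using a by (simp add: heavy_def)
    also have "\<dots> = t * (n * deg F a)" by simp
    also have "\<dots> \<le> t * (t * ?D)"
      using through_a by simp
    finally have "n * ?D \<le> (t * t) * ?D" by simp
    moreover have "0 < ?D" using n by simp
    ultimately show False using n by simp
  qed
qed

lemma sum_deg_not_heavy_le:
  assumes "finite Z" "card Z \<le> t"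
  shows "(\<Sum>z\<in>Z - heavy r n t F. deg F z) \<le> n ^ (r - 1)"
proof (cases "t = 0")
  case True
  then show ?thesis using assms by simp
next
  case False
  have "t * (\<Sum>z\<in>Z - heavy r n t F. deg F z) = (\<Sum>z\<in>Z - heavy r n t F. t * deg F z)"
    by (simp add: sum_distrib_left)
  also have "\<dots> \<le> (\<Sum>z\<in>Z - heavy r n t F. n ^ (r - 1))"
    by (intro sum_mono) (auto simp: heavy_def)
  also have "\<dots> \<le> t * n ^ (r - 1)"
    using assms card_mono[OF assms(1), of "Z - heavy r n t F"] by simp
  finally show ?thesis using False by simp
qed

lemma card_heavy_ge:
  assumes F: "F \<subseteq> complete_rpartite r n" and "0 < n"
    and big: "(k - 1) * n ^ (r - 1) < card F" and not_ext: "\<not> extendable t F {}"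
  shows "k - 1 \<le> card (heavy r n t F)"
proof -
  let ?H = "heavy r n t F" and ?D = "n ^ (r - 1)"
  obtain Z where Z: "finite Z" "card Z \<le> t" and cover: "\<And>e. e \<in> F \<Longrightarrow> e \<inter> Z \<noteq> {}"
    using not_ext by (auto simp: extendable_def)
  have "card F \<le> (\<Sum>z\<in>Z. deg F z)"
    by (rule card_le_sum_deg_of_cover[OF Z(1) cover])
  also have "\<dots> = (\<Sum>z\<in>Z \<inter> ?H. deg F z) + (\<Sum>z\<in>Z - ?H. deg F z)"
    using Z(1) by (rule sum.Int_Diff)
  also have "(\<Sum>z\<in>Z \<inter> ?H. deg F z) \<le> card (Z \<inter> ?H) * ?D"
    using sum_bounded_above[of "Z \<inter> ?H" "deg F" ?D] deg_complete_rpartite_le[OF F] by simp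
  also have "\<dots> \<le> card ?H * ?D"
    using finite_heavy[OF F \<open>0 < n\<close>] by (simp add: card_mono)
  also have "(\<Sum>z\<in>Z - ?H. deg F z) \<le> ?D"
    using Z by (rule sum_deg_not_heavy_le)
  finally have "(k - 1) * ?D < (card ?H + 1) * ?D"
    using big by simp
  then have "k - 1 < card ?H + 1"
    using mult_less_cancel2 by blast
  then show ?thesis by simp
qed

lemma exists_edge_avoiding:
  assumes F: "F \<subseteq> complete_rpartite r n" and "finite Z"
    and big: "card Z * n ^ (r - 1) < card F"
  shows "\<exists>e\<in>F. e \<inter> Z = {}"
proof (rule ccontr)
  assume "\<not> ?thesis"
  then have "card F \<le> (\<Sum>z\<in>Z. deg F z)"
    using card_le_sum_deg_of_cover[OF \<open>finite Z\<close>, of F] by blast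
  also have "\<dots> \<le> card Z * n ^ (r - 1)"
    using sum_bounded_above[of Z "deg F" "n ^ (r - 1)"] deg_complete_rpartite_le[OF F] by simp
  finally show False using big by simp
qed

section \<open>Systems of distinct representatives\<close>

definition sdr :: "'i set \<Rightarrow> ('i \<Rightarrow> 'a set) \<Rightarrow> ('i \<Rightarrow> 'a) \<Rightarrow> bool" where
  "sdr I S a \<longleftrightarrow> inj_on a I \<and> (\<forall>i\<in>I. a i \<in> S i)"

lemma sdr_fun_upd:
  assumes "sdr J (\<lambda>j. S j - {x}) a" "x \<in> S i" "i \<notin> J"
  shows "sdr (insert i J) S (a(i := x))"
proof -
  have inj: "inj_on a J" and reps: "\<And>j. j \<in> J \<Longrightarrow> a j \<in> S j \<and> a j \<noteq> x"
    using assms(1) unfolding sdr_def by auto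
  have "x \<notin> a ` J"
    using reps by blast
  then have "inj_on (a(i := x)) J"
    by (rule inj_on_fun_updI[OF inj])
  moreover have "x \<notin> (a(i := x)) ` (J - {i})"
    using \<open>x \<notin> a ` J\<close> \<open>i \<notin> J\<close> by auto
  ultimately have "inj_on (a(i := x)) (insert i J)"
    by simp
  then show ?thesis
    using reps assms(2,3) unfolding sdr_def by auto
qed
lemma sdr_insert:
  assumes a: "sdr J S a" and "finite J" "i \<notin> J" and less: "card J < card (S i)"
  shows "\<exists>b. sdr (insert i J) S b"
proof -
  have "\<not> S i \<subseteq> a ` J"
  proof
    assume "S i \<subseteq> a ` J"
    then have "card (S i) \<le> card (a ` J)"
      using \<open>finite J\<close> by (simp add: card_mono)
    also have "\<dots> \<le> card J"
      using \<open>finite J\<close> by (rule card_image_le)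
    finally show False using less by simp
  qed
  then obtain x where x: "x \<in> S i" "x \<notin> a ` J" by blast
  have "sdr J (\<lambda>j. S j - {x}) a"
    using a x(2) by (auto simp: sdr_def)
  then have "sdr (insert i J) S (a(i := x))"
    using x(1) \<open>i \<notin> J\<close> by (rule sdr_fun_upd)
  then show ?thesis by blast
qed

lemma sdr_exists:
  assumes "finite I" "card I \<le> m" "\<And>i. i \<in> I \<Longrightarrow> m \<le> card (S i)"
  shows "\<exists>a. sdr I S a"
  using assms
proof (induction I rule: finite_induct)
  case empty
  show ?case by (simp add: sdr_def)
next
  case (insert i J)
  then have "card J < m" by simp
  then obtain a where a: "sdr J S a"
    using insert.IH insert.prems(2) by force
  have "card J < card (S i)"
    using \<open>card J < m\<close> insert.prems(2) by fastforce
  then show ?case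
    by (rule sdr_insert[OF a insert.hyps(1,2)])
qed

lemma sdr_if_card_ge:
  assumes "finite N" "p \<in> N" "card N \<le> card (H p)"
    and H: "\<And>i. i \<in> N \<Longrightarrow> card N - 1 \<le> card (H i)"
  shows "\<exists>a. sdr N H a"
proof -
  have card_N: "card (N - {p}) = card N - 1" using assms(1,2) by simp
  then obtain a where "sdr (N - {p}) H a"
    using sdr_exists[of "N - {p}" "card N - 1" H] assms(1) H by auto
  moreover have "0 < card N"
    using assms(1,2) card_gt_0_iff by blast
  then have "card (N - {p}) < card (H p)"
    using card_N assms(3) by linarith
  ultimately have "\<exists>b. sdr (insert p (N - {p})) H b"
    using assms(1) by (intro sdr_insert) auto
  then show ?thesis using assms(2) by (simp add: insert_absorb)
qed

text \<open>Representatives avoiding x are chosen greedily for all sets but H p, which then takes x.\<close>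

lemma sdr_if_not_subset:
  assumes "finite N" "p \<in> N" "q \<in> N" "x \<in> H p" "x \<notin> H q"
    and H: "\<And>i. i \<in> N \<Longrightarrow> card N - 1 \<le> card (H i)"
  shows "\<exists>a. sdr N H a"
proof -
  let ?M = "N - {p, q}" and ?S = "\<lambda>i. H i - {x}"
  have "p \<noteq> q" using assms(4,5) by blast
  then have card_pq: "card {p, q} = 2" by simp
  have pq: "{p, q} \<subseteq> N" using assms(2,3) by simp
  have "2 \<le> card N"
    using card_mono[OF assms(1) pq] card_pq by simp
  have card_M: "card ?M = card N - 2"
    using card_Diff_subset[OF _ pq] card_pq by simp
  moreover have "card N - 2 \<le> card (?S i)" if "i \<in> ?M" for i
    using H[of i] that diff_card_le_card_Diff[of "{x}" "H i"] by simp
  ultimately obtain a where "sdr ?M ?S a"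
    using sdr_exists[of ?M "card N - 2" ?S] assms(1) by auto
  moreover have "card ?M < card (?S q)"
    using card_M H[OF assms(3)] assms(5) \<open>2 \<le> card N\<close> by simp
  ultimately obtain b where "sdr (insert q ?M) ?S b"
    using sdr_insert[of ?M ?S a q] assms(1) by auto
  then have "sdr (insert p (insert q ?M)) H (b(p := x))"
    using assms(4) \<open>p \<noteq> q\<close> by (intro sdr_fun_upd) auto
  moreover have "insert p (insert q ?M) = N" using assms(2,3) by blast
  ultimately show ?thesis by auto
qed

lemma sdr_or_uniform:
  assumes "1 \<le> k" and N: "N \<subseteq> {..<k}" and H: "\<And>i. i \<in> N \<Longrightarrow> k - 1 \<le> card (H i)"
  shows "(\<exists>a. sdr N H a) \<or> (N = {..<k} \<and> (\<forall>i<k. H i = H 0) \<and> card (H 0) = k - 1)"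
proof -
  have fin: "finite N" using N finite_subset by blast
  have "card N \<le> k" using N card_mono[of "{..<k}" N] by simp
  then consider (small) "card N \<le> k - 1" | (full) "card N = k" by linarith
  then show ?thesis
  proof cases
    case small
    then show ?thesis using sdr_exists[of N "k - 1" H, OF fin small H] by blast
  next
    case full
    then have N_eq: "N = {..<k}" using card_subset_eq[of "{..<k}" N] N by simp
    have H': "\<And>i. i \<in> N \<Longrightarrow> card N - 1 \<le> card (H i)" using H full by simp
    consider (big) p where "p \<in> N" "k \<le> card (H p)"
      | (distinct) p q x where "p \<in> N" "q \<in> N" "x \<in> H p" "x \<notin> H q"
      | (uniform) "\<forall>p\<in>N. \<not> k \<le> card (H p)" "\<forall>p\<in>N. \<forall>q\<in>N. H p \<subseteq> H q"
      by blast
    then show ?thesis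
    proof cases
      case big
      then show ?thesis using sdr_if_card_ge[OF fin big(1) _ H'] full by simp
    next
      case distinct
      then show ?thesis using sdr_if_not_subset[OF fin distinct H'] by simp
    next
      case uniform
      have "0 \<in> N" using N_eq \<open>1 \<le> k\<close> by simp
      then have "\<forall>i<k. H i = H 0" using uniform(2) N_eq by blast
      moreover have "card (H 0) = k - 1" using H[OF \<open>0 \<in> N\<close>] uniform(1) \<open>0 \<in> N\<close> by force
      ultimately show ?thesis using N_eq by blast
    qed
  qed
qed

section \<open>Rainbow matchings\<close>

lemma card_UN_lessThan_le:
  assumes "\<And>i. i < m \<Longrightarrow> card (A i) \<le> r"
  shows "card (\<Union>i<m. A i) \<le> r * m"
proof -
  have "card (\<Union>i<m. A i) \<le> (\<Sum>i<m. card (A i))"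
    by (rule card_UN_le) simp
  also have "\<dots> \<le> r * m"
    using sum_bounded_above[of "{..<m}" "\<lambda>i. card (A i)" r] assms by (simp add: mult.commute)
  finally show ?thesis .
qed

context
  fixes F :: "nat \<Rightarrow> 'a set set" and P :: "nat \<Rightarrow> 'a set" and k r t :: nat
  assumes edges: "\<And>i e. i < k \<Longrightarrow> e \<in> F i \<Longrightarrow> finite e \<and> card e \<le> r"
    and disjoint: "disjoint_family_on P {..<k}"
    and finite: "finite (\<Union>i<k. P i)"
    and size: "card (\<Union>i<k. P i) + r * (k - 1) \<le> t"
    and ext: "\<And>i. i < k \<Longrightarrow> extendable t (F i) (P i)"
begin

lemma rainbow_matching_greedy_step:
  assumes "m < k" and e: "\<And>i. i < m \<Longrightarrow> e i \<in> F i \<and> e i \<inter> ((\<Union>i<k. P i) - P i) = {}"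
  shows "\<exists>x\<in>F m. x \<inter> ((\<Union>i<m. e i) \<union> ((\<Union>i<k. P i) - P m)) = {}"
proof -
  let ?Y = "\<Union>i<k. P i"
  define Z where "Z = (\<Union>i<m. e i) \<union> (?Y - P m)"
  have e_edge: "finite (e i) \<and> card (e i) \<le> r" if "i < m" for i
    using e edges[of i "e i"] \<open>m < k\<close> that by simp
  have "finite Z"
    unfolding Z_def using e_edge finite by auto
  have "card (\<Union>i<m. e i) \<le> r * m"
    using e_edge by (intro card_UN_lessThan_le) simp
  moreover have "card (?Y - P m) \<le> card ?Y"
    by (rule card_mono[OF finite Diff_subset])
  ultimately have "card Z \<le> r * m + card ?Y"
    unfolding Z_def using card_Un_le[of "\<Union>i<m. e i" "?Y - P m"] by linarith
  also have "\<dots> \<le> t"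
    using size mult_le_mono2[of m "k - 1" r] \<open>m < k\<close> by linarith
  finally have "card Z \<le> t" .
  have "P m \<subseteq> ?Y - P i" if "i < m" for i
    using disjoint_family_onD[OF disjoint, of m i] that \<open>m < k\<close> by auto
  then have "e i \<inter> P m = {}" if "i < m" for i
    using e[OF that] that by blast
  then have "Z \<inter> P m = {}"
    unfolding Z_def by blast
  then obtain x where "x \<in> F m" "x \<inter> Z = {}"
    using ext[OF \<open>m < k\<close>] \<open>finite Z\<close> \<open>card Z \<le> t\<close> unfolding extendable_def by blast
  then show ?thesis unfolding Z_def by blast
qed

text \<open>Each edge avoids the reservations of the other families, so no family is blocked.\<close>

lemma rainbow_matching_greedy: "\<exists>e. rainbow_matching k F e"
proof -
  have "\<exists>e. (\<forall>i<m. e i \<in> F i \<and> e i \<inter> ((\<Union>i<k. P i) - P i) = {}) \<and> disjoint_family_on e {..<m}"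
    if "m \<le> k" for m
    using that
  proof (induction m)
    case 0
    show ?case by (simp add: disjoint_family_on_def)
  next
    case (Suc m)
    then obtain e where e: "\<forall>i<m. e i \<in> F i \<and> e i \<inter> ((\<Union>i<k. P i) - P i) = {}"
      and disj: "disjoint_family_on e {..<m}" by auto
    obtain x where x: "x \<in> F m" "x \<inter> ((\<Union>i<m. e i) \<union> ((\<Union>i<k. P i) - P m)) = {}"
      using rainbow_matching_greedy_step[of m e] e Suc.prems by auto
    have "\<forall>i<Suc m. (e(m := x)) i \<in> F i \<and> (e(m := x)) i \<inter> ((\<Union>i<k. P i) - P i) = {}"
      using e x by (auto simp: less_Suc_eq)
    moreover have "(e(m := x)) i \<inter> (e(m := x)) j = {}" if "i < Suc m" "j < Suc m" "i \<noteq> j" for i j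
      using disjoint_family_onD[OF disj, of i j] x(2) that by (auto simp: less_Suc_eq)
    then have "disjoint_family_on (e(m := x)) {..<Suc m}"
      unfolding disjoint_family_on_def by blast
    ultimately show ?case by blast
  qed
  from this[of k] obtain e where "\<forall>i<k. e i \<in> F i" "disjoint_family_on e {..<k}" by auto
  then have "rainbow_matching k F e"
    unfolding rainbow_matching_def disjoint_family_on_def by simp
  then show ?thesis by blast
qed

end

lemma complete_rpartite_edges_bounded:
  assumes "\<And>i. i < k \<Longrightarrow> F i \<subseteq> complete_rpartite r n"
  shows "\<And>i e. i < k \<Longrightarrow> e \<in> F i \<Longrightarrow> finite e \<and> card e \<le> r"
  using assms finite_complete_rpartite_edge card_complete_rpartite_edge by (metis le_refl subsetD)

lemma rainbow_matching_of_sdr: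
  assumes F: "\<And>i. i < k \<Longrightarrow> F i \<subseteq> complete_rpartite r n"
    and t: "(r + 1) * k \<le> t" "t * t < n"
    and N: "N \<subseteq> {..<k}" and a: "sdr N (\<lambda>i. heavy r n t (F i)) a"
    and robust: "\<And>i. i < k \<Longrightarrow> i \<notin> N \<Longrightarrow> extendable t (F i) {}"
  shows "\<exists>e. rainbow_matching k F e"
proof (rule rainbow_matching_greedy[where P = "\<lambda>i. if i \<in> N then {a i} else {}"])
  have "finite N" using N finite_subset by blast
  have union: "(\<Union>i<k. if i \<in> N then {a i} else {}) = a ` N"
    using N by auto
  show "finite (\<Union>i<k. if i \<in> N then {a i} else {})"
    unfolding union using \<open>finite N\<close> by simp
  have "card (a ` N) \<le> k"
    using card_image_le[OF \<open>finite N\<close>, of a] card_mono[OF finite_lessThan N] by simp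
  moreover have "r * (k - 1) \<le> r * k" by simp
  moreover have "(r + 1) * k = k + r * k" by simp
  ultimately show "card (\<Union>i<k. if i \<in> N then {a i} else {}) + r * (k - 1) \<le> t"
    unfolding union using t(1) by linarith
  have inj: "inj_on a N" using a by (simp add: sdr_def)
  show "disjoint_family_on (\<lambda>i. if i \<in> N then {a i} else {}) {..<k}"
    using inj unfolding disjoint_family_on_def by (auto dest: inj_onD)
  show "extendable t (F i) (if i \<in> N then {a i} else {})" if "i < k" for i
  proof (cases "i \<in> N")
    case True
    then have "a i \<in> heavy r n t (F i)" using a by (simp add: sdr_def)
    with True show ?thesis using extendable_heavy[OF F[OF that] t(2)] by simp
  next
    case False
    then show ?thesis using robust[OF that] by simp
  qed
  show "\<And>i e. i < k \<Longrightarrow> e \<in> F i \<Longrightarrow> finite e \<and> card e \<le> r"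
    by (rule complete_rpartite_edges_bounded[OF F])
qed

lemma rainbow_matching_of_edge_and_sdr:
  assumes F: "\<And>i. i < k \<Longrightarrow> F i \<subseteq> complete_rpartite r n"
    and t: "(r + 1) * k \<le> t" "t * t < n" and "0 < k"
    and g: "g \<in> F 0" and a: "sdr ({..<k} - {0}) (\<lambda>i. heavy r n t (F i)) a"
    and disj: "g \<inter> a ` ({..<k} - {0}) = {}"
  shows "\<exists>e. rainbow_matching k F e"
proof (rule rainbow_matching_greedy[where P = "\<lambda>i. if i = 0 then g else {a i}"])
  have union: "(\<Union>i<k. if i = 0 then g else {a i}) = g \<union> a ` ({..<k} - {0})"
    using \<open>0 < k\<close> by auto
  have "g \<in> complete_rpartite r n" using F[OF \<open>0 < k\<close>] g by blast
  then have g_edge: "finite g \<and> card g \<le> r"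
    by (simp add: finite_complete_rpartite_edge card_complete_rpartite_edge)
  then show "finite (\<Union>i<k. if i = 0 then g else {a i})"
    unfolding union by simp
  have "card (a ` ({..<k} - {0})) \<le> k - 1"
    using card_image_le[of "{..<k} - {0}" a] \<open>0 < k\<close> by simp
  then have "card (\<Union>i<k. if i = 0 then g else {a i}) \<le> r + (k - 1)"
    unfolding union using card_Un_le[of g "a ` ({..<k} - {0})"] g_edge by linarith
  moreover have "r + (k - 1) + r * (k - 1) \<le> (r + 1) * k"
    using \<open>0 < k\<close> by (cases k) (simp_all add: algebra_simps)
  ultimately show "card (\<Union>i<k. if i = 0 then g else {a i}) + r * (k - 1) \<le> t"
    using t(1) by linarith
  have inj: "inj_on a ({..<k} - {0})" using a by (simp add: sdr_def)
  show "disjoint_family_on (\<lambda>i. if i = 0 then g else {a i}) {..<k}"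
    using inj disj unfolding disjoint_family_on_def by (auto dest: inj_onD)
  show "extendable t (F i) (if i = 0 then g else {a i})" if "i < k" for i
  proof (cases "i = 0")
    case True
    then show ?thesis using extendable_edge[OF g] by simp
  next
    case False
    then have "a i \<in> heavy r n t (F i)" using a that by (simp add: sdr_def)
    with False show ?thesis using extendable_heavy[OF F[OF that] t(2)] by simp
  qed
  show "\<And>i e. i < k \<Longrightarrow> e \<in> F i \<Longrightarrow> finite e \<and> card e \<le> r"
    by (rule complete_rpartite_edges_bounded[OF F])
qed

lemma rainbow_matching_of_uniform_heavy:
  assumes F: "\<And>i. i < k \<Longrightarrow> F i \<subseteq> complete_rpartite r n"
    and big: "\<And>i. i < k \<Longrightarrow> (k - 1) * n ^ (r - 1) < card (F i)"
    and t: "(r + 1) * k \<le> t" "t * t < n" and "1 \<le> k"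
    and H: "\<And>i. i < k \<Longrightarrow> heavy r n t (F i) = H" and card_H: "card H = k - 1"
  shows "\<exists>e. rainbow_matching k F e"
proof -
  have "0 < k" "0 < n" using \<open>1 \<le> k\<close> t(2) by auto
  have "finite H"
    using finite_heavy[OF F[OF \<open>0 < k\<close>] \<open>0 < n\<close>, of t] H[OF \<open>0 < k\<close>] by simp
  moreover have "card H * n ^ (r - 1) < card (F 0)"
    using big[OF \<open>0 < k\<close>] card_H by simp
  ultimately obtain g where g: "g \<in> F 0" "g \<inter> H = {}"
    using exists_edge_avoiding[OF F[OF \<open>0 < k\<close>]] by blast
  have "card ({..<k} - {0}) = k - 1" using \<open>0 < k\<close> by simp
  then obtain a where a: "sdr ({..<k} - {0}) (\<lambda>i. heavy r n t (F i)) a"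
    using sdr_exists[of "{..<k} - {0}" "k - 1" "\<lambda>i. heavy r n t (F i)"] H card_H by auto
  have disj: "g \<inter> a ` ({..<k} - {0}) = {}"
    using a H g(2) unfolding sdr_def by auto
  show ?thesis
    using rainbow_matching_of_edge_and_sdr[where F = F and k = k, OF F t \<open>0 < k\<close> g(1) a disj] .
qed

lemma rainbow_matching_if_large:
  assumes "1 \<le> k" and t: "t = (r + 1) * k" and n: "t * t < n"
    and F: "\<And>i. i < k \<Longrightarrow> F i \<subseteq> complete_rpartite r n"
    and big: "\<And>i. i < k \<Longrightarrow> (k - 1) * n ^ (r - 1) < card (F i)"
  shows "\<exists>e. rainbow_matching k F e"
proof -
  define N where "N = {i. i < k \<and> \<not> extendable t (F i) {}}"
  have N: "N \<subseteq> {..<k}" and robust: "\<And>i. i < k \<Longrightarrow> i \<notin> N \<Longrightarrow> extendable t (F i) {}"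
    unfolding N_def by auto
  have "0 < n" using n by simp
  have heavy_N: "k - 1 \<le> card (heavy r n t (F i))" if "i \<in> N" for i
  proof -
    have i: "i < k" "\<not> extendable t (F i) {}" using that by (simp_all add: N_def)
    show ?thesis by (rule card_heavy_ge[OF F[OF i(1)] \<open>0 < n\<close> big[OF i(1)] i(2)])
  qed
  then consider (sdr) a where "sdr N (\<lambda>i. heavy r n t (F i)) a"
    | (uniform) "\<And>i. i < k \<Longrightarrow> heavy r n t (F i) = heavy r n t (F 0)"
        "card (heavy r n t (F 0)) = k - 1"
    using sdr_or_uniform[of k N "\<lambda>i. heavy r n t (F i)", OF \<open>1 \<le> k\<close> N heavy_N] by blast
  then show ?thesis
  proof cases
    case sdr
    show ?thesis
      using rainbow_matching_of_sdr[OF F _ n N sdr robust] t by simp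
  next
    case uniform
    show ?thesis
      using rainbow_matching_of_uniform_heavy[OF F big _ n \<open>1 \<le> k\<close> uniform] t by simp
  qed
qed

theorem theorem9p1:
  fixes r k :: nat
  assumes "r \<ge> 1" and "k \<ge> 1"
  shows "\<exists>n0::nat. \<forall>n > n0. \<forall>F :: nat \<Rightarrow> (nat \<times> nat) set set.
           (\<forall>i<k. F i \<subseteq> complete_rpartite r n \<and> card (F i) > (k - 1) * n ^ (r - 1))
           \<longrightarrow> (\<exists>e. rainbow_matching k F e)"
  using rainbow_matching_if_large[OF \<open>k \<ge> 1\<close> refl]
  by (intro exI[of _ "((r + 1) * k) * ((r + 1) * k)"]) auto

end
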